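(* Let $m,n,d,e$ be positive integers with $m=2n$ and $e=\gcd(n,d)=\gcd(m,d)$, and let $s\ge u\ge2$ be integers. Then \[|V_{s,u,\{0\}}|=2^{eu(u+1)/2}\prod_{i=0}^{u-1}(2^m-2^{ei}).\]
   Context: For integers $s\ge0$ and $u\ge1$, $V_{s,u}$ denotes the set of solutions $(x_1,\dots,x_{2u})\in\mathbb{F}_{2^m}^{2u}$ of the system \[\sum_{i=1}^u\big(x_{2i-1}x_{2i}^{2^{(\frac{n}{e}-j)d}}+x_{2i-1}^{2^{(\frac{n}{e}-j)d}}x_{2i}\big)=0,\qquad j=0,1,\dots,s.\] $V_{s,u,\{0\}}$ is the set of $(x_1,\dots,x_{2u})\in V_{s,u}$ such that $x_2,x_4,\dots,x_{2u}$ are linearly independent over $\mathbb{F}_{2^e}$. Equivalently, $\{(c_1,\dots,c_u)\in\mathbb{F}_{2^e}^u\mid\sum_i c_ix_{2i}=0\}=\{0\}$. *)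

theory Defs
  imports Main
begin

text \<open>The field F_{2^m} is modelled by a finite field type 'a with CARD('a) = 2^m.
  The map x \<mapsto> x^(2^k) for an integer k (possibly negative) is the k-th power of the
  Frobenius; since x^(2^m) = x it depends only on k mod m.\<close>

definition frob :: "nat \<Rightarrow> int \<Rightarrow> 'a::field \<Rightarrow> 'a" where
  "frob m k x = x ^ (2 ^ nat (k mod int m))"

text \<open>Tuples (x_1,...,x_{2u}) are lists xs of length 2u with x_k = xs ! (k-1).\<close>

definition V :: "nat \<Rightarrow> nat \<Rightarrow> nat \<Rightarrow> nat \<Rightarrow> nat \<Rightarrow> nat \<Rightarrow> ('a::{field,finite}) list set" where
  "V m n d e s u = {xs. length xs = 2*u \<and>
     (\<forall>j\<in>{0..s}. (\<Sum>i=1..u.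
        xs!(2*i-2) * frob m ((int (n div e) - int j) * int d) (xs!(2*i-1))
        + frob m ((int (n div e) - int j) * int d) (xs!(2*i-2)) * xs!(2*i-1)) = 0)}"

definition subF :: "nat \<Rightarrow> ('a::field) set" where
  "subF e = {c. c ^ (2 ^ e) = c}"

definition V0 :: "nat \<Rightarrow> nat \<Rightarrow> nat \<Rightarrow> nat \<Rightarrow> nat \<Rightarrow> nat \<Rightarrow> ('a::{field,finite}) list set" where
  "V0 m n d e s u = {xs \<in> V m n d e s u.
     {c :: nat \<Rightarrow> 'a. (\<forall>i. c i \<in> subF e) \<and> (\<forall>i. i \<notin> {1..u} \<longrightarrow> c i = 0) \<and>
        (\<Sum>i=1..u. c i * xs!(2*i-1)) = 0} = {\<lambda>_. 0}}"

end

theory Submission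
  imports Defs "HOL-Computational_Algebra.Polynomial" "HOL-Library.FuncSet"
begin

text \<open>Write \<open>K\<close> for the field with \<open>2^m\<close> elements, \<open>F\<close> for its subfield with \<open>2^e\<close> elements,
  \<open>N = n / e\<close> and \<open>M = m / e = 2 N\<close>. Since \<open>gcd d m = e\<close>, \<open>\<sigma> = Frob^d\<close> generates
  \<open>Gal(K/F)\<close>, of order \<open>M\<close>, and the equations of \<open>V\<close> say that
  \<open>beta k = (\<Sum>i. x i * \<sigma>^k (y i) + \<sigma>^k (x i) * y i)\<close> vanishes for \<open>k = N - j\<close>, \<open>j \<le> s\<close>;
  as \<open>beta (M - k) = \<sigma>^(M - k) (beta k)\<close>, it vanishes on the window \<open>|k - N| \<le> s\<close>.
  The \<open>\<sigma>\<close>-polynomial \<open>P t = (\<Sum>k<M. beta k * \<sigma>^k t) = (\<Sum>i. x i * T (y i * t) + y i * T (x i * t))\<close>,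
  \<open>T\<close> the trace to \<open>F\<close>, takes at most \<open>card F ^ (2 u)\<close> values, while a nonzero
  \<open>\<sigma>\<close>-polynomial whose coefficients vanish on a cyclic gap of length \<open>2 s + 1\<close> has at most
  \<open>card F ^ (M - 2 s - 2)\<close> roots, an analogue of the degree bound. Since \<open>u \<le> s\<close>, \<open>P = 0\<close>.
  For \<open>y\<close> independent over \<open>F\<close>, evaluating \<open>P\<close> on a basis dual to \<open>y\<close> for the trace form
  shows that \<open>P = 0\<close> iff \<open>x = C y\<close> for a symmetric \<open>u \<times> u\<close> matrix \<open>C\<close> over \<open>F\<close>. It remains to
  count the \<open>\<Prod>i<u. 2^m - 2^(e i)\<close> independent \<open>y\<close> and the \<open>2^(e u (u + 1) / 2)\<close> matrices \<open>C\<close>.\<close>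

section \<open>Finite fields of characteristic two\<close>

lemma power_card_eq_self:
  fixes x :: "'a::{field,finite}"
  shows "x ^ card (UNIV :: 'a set) = x"
proof (cases "x = 0")
  case False
  have "(\<Prod>y\<in>UNIV - {0}. x * y) = (\<Prod>y\<in>UNIV - {0}. y)"
    by (rule prod.reindex_bij_witness[of _ "\<lambda>y. y / x" "\<lambda>y. x * y"]) (use False in auto)
  moreover have "(\<Prod>y\<in>UNIV - {0}. x * y) = x ^ (card (UNIV :: 'a set) - 1) * (\<Prod>y\<in>UNIV - {0}. y)"
    by (simp add: prod.distrib card_Diff_singleton)
  moreover have "(\<Prod>y\<in>UNIV - {0::'a}. y) \<noteq> 0" by simp
  ultimately have "x ^ (card (UNIV :: 'a set) - 1) = 1" by simp
  moreover have "card (UNIV :: 'a set) = Suc (card (UNIV :: 'a set) - 1)"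
    using finite_UNIV_card_ge_0[where 'a='a] by simp
  ultimately show ?thesis by (metis mult.right_neutral power_Suc)
qed (simp add: finite_UNIV_card_ge_0)

lemma CHAR_eq_2_if_card_eq_two_power:
  assumes "card (UNIV :: 'a::{field,finite} set) = 2 ^ m" "m > 0"
  shows "CHAR('a) = 2"
proof (rule CHAR_eq_posI)
  have "(-1::'a) = (-1) ^ card (UNIV :: 'a set)" by (rule power_card_eq_self[symmetric])
  also have "\<dots> = 1" using assms by simp
  finally show "of_nat 2 = (0::'a)" by (simp add: eq_neg_iff_add_eq_0)
  show "x > 0 \<Longrightarrow> x < 2 \<Longrightarrow> of_nat x \<noteq> (0::'a)" for x by (simp add: less_2_cases_iff)
qed simp

lemma power_two_pow_add:
  assumes "CHAR('a::comm_semiring_1) = 2"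
  shows "(x + y :: 'a) ^ 2 ^ k = x ^ 2 ^ k + y ^ 2 ^ k"
  using assms by (intro freshmans_dream') simp_all

lemma power_two_pow_sum:
  assumes "CHAR('a::comm_semiring_1) = 2"
  shows "sum f A ^ 2 ^ k = (\<Sum>i\<in>A. f i ^ 2 ^ k :: 'a)"
  using assms by (intro freshmans_dream_sum') simp_all

lemma add_self_CHAR_2:
  assumes "CHAR('a::ring_1) = 2"
  shows "(x :: 'a) + x = 0"
  using uminus_CHAR_2[OF assms, of x] by (metis add.right_inverse)

lemma power_two_pow_inj:
  assumes "CHAR('a::idom) = 2" "(x :: 'a) ^ 2 ^ k = y ^ 2 ^ k"
  shows "x = y"
proof -
  have "(x + y) ^ 2 ^ k = 0"
    using assms by (simp add: power_two_pow_add add_self_CHAR_2)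
  hence "x = - y" by (simp add: eq_neg_iff_add_eq_0)
  thus ?thesis by (simp add: uminus_CHAR_2[OF assms(1)])
qed

lemma power_two_pow_fixed_mult:
  assumes "(x :: 'a::monoid_mult) ^ 2 ^ k = x"
  shows "x ^ 2 ^ (k * t) = x"
proof (induction t)
  case (Suc t)
  have "x ^ 2 ^ (k * Suc t) = (x ^ 2 ^ (k * t)) ^ 2 ^ k"
    by (simp add: power_add power_mult[symmetric] mult.commute)
  thus ?case using Suc assms by simp
qed simp

text \<open>The fixed points of \<open>x \<mapsto> x^(2^p)\<close> and of \<open>x \<mapsto> x^(2^r)\<close> are fixed by
  \<open>x \<mapsto> x^(2^gcd p r)\<close>: write \<open>r i = p j + gcd r p\<close> and cancel the injective \<open>x \<mapsto> x^(2^(p j))\<close>.\<close>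
lemma power_two_pow_fixed_gcd:
  assumes "CHAR('a::idom) = 2" "(x :: 'a) ^ 2 ^ p = x" "x ^ 2 ^ r = x" "r \<noteq> 0"
  shows "x ^ 2 ^ gcd p r = x"
proof -
  obtain i j where ij: "r * i = p * j + gcd r p" using bezout_nat[OF assms(4)] by blast
  have "(x ^ 2 ^ gcd p r) ^ 2 ^ (p * j) = x ^ 2 ^ (p * j + gcd r p)"
    by (simp add: power_add power_mult[symmetric] gcd.commute mult.commute)
  also have "\<dots> = x ^ 2 ^ (r * i)" by (simp only: ij)
  also have "\<dots> = x ^ 2 ^ (p * j)" using assms power_two_pow_fixed_mult by metis
  finally show ?thesis using power_two_pow_inj[OF assms(1)] by blast
qed

lemma additive_fiber_eq_image:
  fixes f :: "'a::ab_group_add \<Rightarrow> 'b::ab_group_add"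
  assumes add: "\<And>a b. f (a + b) = f a + f b" and x0: "f x0 = b"
  shows "{x. f x = b} = (\<lambda>k. x0 + k) ` {k. f k = 0}"
proof (intro set_eqI iffI)
  fix x assume "x \<in> {x. f x = b}"
  moreover have "f (x - x0) = f x - f x0" using add[of "x - x0" x0] by (simp add: algebra_simps)
  ultimately show "x \<in> (\<lambda>k. x0 + k) ` {k. f k = 0}"
    using x0 by (intro image_eqI[of _ _ "x - x0"]) auto
qed (use add x0 in auto)

lemma card_additive_fiber_le:
  fixes f :: "'a::{ab_group_add,finite} \<Rightarrow> 'b::ab_group_add"
  assumes "\<And>a b. f (a + b) = f a + f b"
  shows "card {x. f x = b} \<le> card {x. f x = 0}"
proof (cases "b \<in> range f")
  case True
  then obtain x0 where "f x0 = b" by auto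
  thus ?thesis by (simp add: additive_fiber_eq_image[OF assms] card_image_le)
next
  case False
  hence "{x. f x = b} = {}" by auto
  thus ?thesis by simp
qed

lemma card_UNIV_eq_card_kernel_mult_card_range:
  fixes f :: "'a::{ab_group_add,finite} \<Rightarrow> 'b::ab_group_add"
  assumes add: "\<And>a b. f (a + b) = f a + f b"
  shows "card (UNIV :: 'a set) = card {x. f x = 0} * card (range f)"
proof -
  have fiber: "card {x. f x = b} = card {x. f x = 0}" if "b \<in> range f" for b
  proof -
    from that obtain x0 where "f x0 = b" by auto
    thus ?thesis by (simp add: additive_fiber_eq_image[OF add] card_image)
  qed
  have "UNIV = (\<Union>b\<in>range f. {x. f x = b})" by auto
  hence "card (UNIV :: 'a set) = card (\<Union>b\<in>range f. {x. f x = b})" by simp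
  also have "\<dots> = (\<Sum>b\<in>range f. card {x. f x = b})"
    by (intro card_UN_disjoint) auto
  finally show ?thesis using fiber by simp
qed

lemma card_additive_vimage_le:
  fixes f :: "'a::{ab_group_add,finite} \<Rightarrow> 'b::ab_group_add"
  assumes add: "\<And>a b. f (a + b) = f a + f b" and "finite B"
  shows "card (f -` B) \<le> card {x. f x = 0} * card B"
proof -
  have "f -` B = (\<Union>b\<in>B. {x. f x = b})" by auto
  also have "card \<dots> = (\<Sum>b\<in>B. card {x. f x = b})"
    using \<open>finite B\<close> by (intro card_UN_disjoint) auto
  also have "\<dots> \<le> (\<Sum>b\<in>B. card {x. f x = 0})"
    by (intro sum_mono card_additive_fiber_le[OF add])
  finally show ?thesis by (simp add: mult.commute)
qed

lemma suffix_sums_eq_0_imp_eq_0: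
  fixes c :: "nat \<Rightarrow> 'a::ab_group_add"
  assumes "\<And>j. j \<le> n \<Longrightarrow> sum c {j..n} = 0" "i \<le> n"
  shows "c i = 0"
proof -
  have "sum c {i..n} = c i + sum c {Suc i..n}"
    using \<open>i \<le> n\<close> by (rule sum.atLeast_Suc_atMost)
  moreover have "sum c {Suc i..n} = 0"
    using assms by (cases "Suc i \<le> n") auto
  ultimately show ?thesis using assms by simp
qed

lemma sum_lessThan_Suc_fun_upd:
  "(\<Sum>i<Suc u. (c(u := a)) i * y i) = (\<Sum>i<u. c i * y i) + (a * y u :: 'a::semiring_0)"
proof -
  have "(\<Sum>i<u. (c(u := a)) i * y i) = (\<Sum>i<u. c i * y i)" by (rule sum.cong) auto
  thus ?thesis by simp
qed

lemma sum_lessThan_mult_delta: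
  "i < (u::nat) \<Longrightarrow> (\<Sum>j<u. a j * (if i = j then 1 else 0)) = (a i :: 'a::semiring_1)"
  by (simp add: if_distrib cong: if_cong)

lemma finite_funs_vanishing_from:
  "finite {y :: nat \<Rightarrow> 'a::{finite,zero}. \<forall>i\<ge>u. y i = 0}"
proof (rule finite_subset)
  show "{y :: nat \<Rightarrow> 'a. \<forall>i\<ge>u. y i = 0} \<subseteq> (\<lambda>f i. if i < u then f i else 0) ` (\<Pi>\<^sub>E i\<in>{..<u}. UNIV)"
  proof
    fix y :: "nat \<Rightarrow> 'a" assume "y \<in> {y. \<forall>i\<ge>u. y i = 0}"
    thus "y \<in> (\<lambda>f i. if i < u then f i else 0) ` (\<Pi>\<^sub>E i\<in>{..<u}. UNIV)"
      by (intro rev_image_eqI[of "restrict y {..<u}"]) (auto simp: fun_eq_iff)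
  qed
qed (intro finite_imageI finite_PiE; simp)

lemma periodic_add_mult:
  fixes g :: "nat \<Rightarrow> 'a" and q :: nat
  assumes "\<And>k. g (k + M) = g k"
  shows "g (k + q * M) = g k"
proof (induction q)
  case (Suc q)
  have "g (k + Suc q * M) = g ((k + q * M) + M)" by (simp add: add_ac)
  thus ?case using Suc assms by simp
qed simp

lemma sum_lessThan_shift_periodic:
  fixes g :: "nat \<Rightarrow> 'a::cancel_comm_monoid_add"
  assumes "\<And>k. g (k + M) = g k"
  shows "(\<Sum>l<M. g (a + l)) = (\<Sum>k<M. g k)"
proof (induction a)
  case (Suc a)
  have "g a + (\<Sum>l<M. g (Suc a + l)) = (\<Sum>l<Suc M. g (a + l))"
    by (subst sum.lessThan_Suc_shift) simp
  also have "\<dots> = (\<Sum>l<M. g (a + l)) + g a" by (simp only: sum.lessThan_Suc assms)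
  finally show ?case using Suc.IH by (simp add: add.commute)
qed simp

text \<open>In the paper's numbering, \<open>pair_fst u xs i = x\<^sub>2\<^sub>i\<^sub>+\<^sub>1\<close> and \<open>pair_snd u xs i = x\<^sub>2\<^sub>i\<^sub>+\<^sub>2\<close>.\<close>
definition pair_fst :: "nat \<Rightarrow> 'a::zero list \<Rightarrow> nat \<Rightarrow> 'a" where
  "pair_fst u xs i = (if i < u then xs ! (2 * i) else 0)"

definition pair_snd :: "nat \<Rightarrow> 'a::zero list \<Rightarrow> nat \<Rightarrow> 'a" where
  "pair_snd u xs i = (if i < u then xs ! (2 * i + 1) else 0)"

lemma bij_betw_pair_coords:
  "bij_betw (\<lambda>xs. (pair_snd u xs, pair_fst u xs)) {xs :: 'a::zero list. length xs = 2 * u}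
     ({y. \<forall>i\<ge>u. y i = 0} \<times> {x. \<forall>i\<ge>u. x i = 0})"
proof (rule bij_betw_byWitness[where
      f' = "\<lambda>(y, x). map (\<lambda>k. if even k then x (k div 2) else y (k div 2)) [0..<2 * u]"])
  show "\<forall>xs\<in>{xs. length xs = 2 * u}.
      (\<lambda>(y, x). map (\<lambda>k. if even k then x (k div 2) else y (k div 2)) [0..<2 * u])
        (pair_snd u xs, pair_fst u xs) = xs"
    by (auto simp: pair_fst_def pair_snd_def intro!: nth_equalityI)
  show "\<forall>p\<in>{y. \<forall>i\<ge>u. y i = 0} \<times> {x. \<forall>i\<ge>u. x i = 0}.
      (\<lambda>xs. (pair_snd u xs, pair_fst u xs))
        ((\<lambda>(y, x). map (\<lambda>k. if even k then x (k div 2) else y (k div 2)) [0..<2 * u]) p) = p"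
    by (auto simp: pair_fst_def pair_snd_def fun_eq_iff not_less)
qed (auto simp: pair_fst_def pair_snd_def)

section \<open>The automorphism \<open>\<sigma>\<close> and its fixed field\<close>

locale frobenius_power =
  fixes m d e M :: nat
  assumes card_field: "card (UNIV :: 'a::{field,finite} set) = 2 ^ m"
    and m_pos: "m > 0" and gcd_d_m: "gcd d m = e" and m_eq: "m = e * M"
begin

lemma CHAR_eq_2: "CHAR('a) = 2"
  using CHAR_eq_2_if_card_eq_two_power card_field m_pos .

lemma e_pos: "e > 0" using gcd_d_m m_pos by auto

lemma M_pos: "M > 0" using m_pos m_eq by simp

definition \<sigma> :: "nat \<Rightarrow> 'a \<Rightarrow> 'a" where
  "\<sigma> k x = x ^ 2 ^ (k * d mod m)"

abbreviation F :: "'a set" where "F \<equiv> subF e"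

lemma power_two_pow_mod: "(x::'a) ^ 2 ^ k = x ^ 2 ^ (k mod m)"
proof -
  have "x ^ 2 ^ m = x" using power_card_eq_self[of x] card_field by simp
  hence "x ^ 2 ^ (m * (k div m)) = x" by (rule power_two_pow_fixed_mult)
  moreover have "x ^ 2 ^ k = (x ^ 2 ^ (m * (k div m))) ^ 2 ^ (k mod m)"
    by (simp flip: power_mult power_add)
  ultimately show ?thesis by simp
qed

lemma \<sigma>_\<sigma>: "\<sigma> a (\<sigma> b x) = \<sigma> (a + b) x"
proof -
  have "\<sigma> a (\<sigma> b x) = x ^ 2 ^ (b * d mod m + a * d mod m)"
    by (simp add: \<sigma>_def flip: power_mult power_add)
  also have "\<dots> = x ^ 2 ^ ((b * d mod m + a * d mod m) mod m)"
    by (rule power_two_pow_mod)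
  also have "(b * d mod m + a * d mod m) mod m = (a + b) * d mod m"
    by (simp add: mod_add_eq algebra_simps)
  finally show ?thesis by (simp add: \<sigma>_def)
qed

lemma \<sigma>_mod: "\<sigma> k x = \<sigma> (k mod M) x"
proof -
  obtain c where "d = e * c" using gcd_dvd1[of d m] gcd_d_m by (auto elim!: dvdE)
  hence c: "M * d = m * c" using m_eq by simp
  have "k * d = (k mod M) * d + m * (c * (k div M))"
    using c by (metis add.commute div_mult_mod_eq distrib_right mult.assoc mult.commute)
  hence "k * d mod m = (k mod M) * d mod m" by simp
  thus ?thesis by (simp add: \<sigma>_def)
qed

lemma \<sigma>_M: "\<sigma> M x = x" using \<sigma>_mod[of M] by (simp add: \<sigma>_def)

lemma \<sigma>_add_M: "\<sigma> (k + M) x = \<sigma> k x"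
  by (metis \<sigma>_mod mod_add_self2)

lemma \<sigma>_0 [simp]: "\<sigma> 0 x = x" by (simp add: \<sigma>_def)
lemma \<sigma>_eq_0_iff [simp]: "\<sigma> k x = 0 \<longleftrightarrow> x = 0" by (simp add: \<sigma>_def)
lemma \<sigma>_add: "\<sigma> k (a + b) = \<sigma> k a + \<sigma> k b" by (simp add: \<sigma>_def power_two_pow_add CHAR_eq_2)
lemma \<sigma>_diff: "\<sigma> k (a - b) = \<sigma> k a - \<sigma> k b" by (simp add: minus_CHAR_2[OF CHAR_eq_2] \<sigma>_add)
lemma \<sigma>_mult: "\<sigma> k (a * b) = \<sigma> k a * \<sigma> k b" by (simp add: \<sigma>_def power_mult_distrib)
lemma \<sigma>_sum: "\<sigma> k (sum g I) = (\<Sum>i\<in>I. \<sigma> k (g i))" by (simp add: \<sigma>_def power_two_pow_sum CHAR_eq_2)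
lemma \<sigma>_inj: "\<sigma> k x = \<sigma> k y \<Longrightarrow> x = y" unfolding \<sigma>_def by (rule power_two_pow_inj[OF CHAR_eq_2])

lemma \<sigma>_subF: "c \<in> F \<Longrightarrow> \<sigma> k c = c"
proof -
  assume "c \<in> F"
  moreover have "e dvd k * d mod m"
    using gcd_dvd1[of d m] gcd_dvd2[of d m] gcd_d_m by (simp add: dvd_mod)
  ultimately show ?thesis by (auto simp: \<sigma>_def subF_def elim!: dvdE intro: power_two_pow_fixed_mult)
qed

lemma subF_if_\<sigma>_fixed: "\<sigma> 1 x = x \<Longrightarrow> x \<in> F"
proof -
  assume "\<sigma> 1 x = x"
  hence "x ^ 2 ^ d = x" by (simp add: \<sigma>_def flip: power_two_pow_mod)
  moreover have "x ^ 2 ^ m = x" using power_card_eq_self[of x] card_field by simp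
  ultimately have "x ^ 2 ^ gcd d m = x" using m_pos by (intro power_two_pow_fixed_gcd[OF CHAR_eq_2]) auto
  thus ?thesis using gcd_d_m by (simp add: subF_def)
qed

lemma subF_add: "a \<in> F \<Longrightarrow> b \<in> F \<Longrightarrow> a + b \<in> F"
  by (simp add: subF_def power_two_pow_add CHAR_eq_2)
lemma subF_diff: "a \<in> F \<Longrightarrow> b \<in> F \<Longrightarrow> a - b \<in> F"
  by (simp add: minus_CHAR_2[OF CHAR_eq_2] subF_add)
lemma subF_divide: "a \<in> F \<Longrightarrow> b \<in> F \<Longrightarrow> a / b \<in> F"
  by (simp add: subF_def power_divide)
lemma subF_zero [simp]: "0 \<in> F" using e_pos by (simp add: subF_def)
lemma subF_one [simp]: "1 \<in> F" by (simp add: subF_def)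

lemma card_subF_le: "card F \<le> 2 ^ e"
proof -
  define p :: "'a poly" where "p = monom 1 (2 ^ e) + [:0, -1:]"
  have "degree p = 2 ^ e" unfolding p_def using e_pos one_less_power[of "2::nat" e]
    by (subst degree_add_eq_left) (auto simp: degree_monom_eq)
  moreover from this have "p \<noteq> 0" by auto
  moreover have "F = {x. poly p x = 0}" by (auto simp: p_def subF_def poly_monom)
  ultimately show ?thesis using card_poly_roots_bound[of p] by simp
qed

lemma card_subF_ge_1: "card F \<ge> 1"
proof -
  have "F \<noteq> {}" using subF_zero by blast
  thus ?thesis by (simp add: Suc_le_eq card_gt_0_iff)
qed

subsection \<open>\<open>\<sigma>\<close>-polynomials and the trace\<close>

definition sigma_poly :: "nat \<Rightarrow> (nat \<Rightarrow> 'a) \<Rightarrow> 'a \<Rightarrow> 'a" where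
  "sigma_poly L \<gamma> t = (\<Sum>l<L. \<gamma> l * \<sigma> l t)"

lemma sigma_poly_add: "sigma_poly L \<gamma> (a + b) = sigma_poly L \<gamma> a + sigma_poly L \<gamma> b"
  by (simp add: sigma_poly_def \<sigma>_add distrib_left sum.distrib)

text \<open>Abel summation, using \<open>\<sigma> l s = s + (\<Sum>i<l. \<sigma> i (\<sigma> 1 s - s))\<close>.\<close>
lemma sigma_poly_summation_by_parts:
  "sigma_poly (Suc n) c s
     = (\<Sum>l\<le>n. c l) * s + sigma_poly n (\<lambda>i. \<Sum>l=Suc i..n. c l) (\<sigma> 1 s - s)"
proof -
  have telescope: "\<sigma> l s = s + (\<Sum>i<l. \<sigma> i (\<sigma> 1 s - s))" for l
    using sum_lessThan_telescope[of "\<lambda>i. \<sigma> i s" l] by (simp add: \<sigma>_diff \<sigma>_\<sigma>)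
  have "sigma_poly (Suc n) c s = (\<Sum>l\<le>n. c l * s + c l * (\<Sum>i<l. \<sigma> i (\<sigma> 1 s - s)))"
    unfolding sigma_poly_def lessThan_Suc_atMost distrib_left[symmetric]
    by (simp only: telescope[symmetric])
  also have "\<dots> = (\<Sum>l\<le>n. c l) * s + (\<Sum>l\<le>n. \<Sum>i<l. c l * \<sigma> i (\<sigma> 1 s - s))"
    by (simp only: sum.distrib sum_distrib_left sum_distrib_right)
  also have "(\<Sum>l\<le>n. \<Sum>i<l. c l * \<sigma> i (\<sigma> 1 s - s))
      = (\<Sum>i<n. \<Sum>l=Suc i..n. c l * \<sigma> i (\<sigma> 1 s - s))"
    by (rule sum.nested_swap')
  finally show ?thesis by (simp add: sigma_poly_def sum_distrib_right)
qed

lemma sigma_poly_mult_root: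
  assumes "sigma_poly (Suc n) \<gamma> v = 0"
  shows "sigma_poly (Suc n) \<gamma> (v * s)
           = sigma_poly n (\<lambda>i. \<Sum>l=Suc i..n. \<gamma> l * \<sigma> l v) (\<sigma> 1 s - s)"
proof -
  have "sigma_poly (Suc n) \<gamma> (v * s) = sigma_poly (Suc n) (\<lambda>l. \<gamma> l * \<sigma> l v) s"
    by (simp add: sigma_poly_def \<sigma>_mult mult.assoc)
  moreover have "(\<Sum>l\<le>n. \<gamma> l * \<sigma> l v) = 0"
    using assms by (simp add: sigma_poly_def lessThan_Suc_atMost)
  ultimately show ?thesis by (simp add: sigma_poly_summation_by_parts)
qed

text \<open>The map \<open>s \<mapsto> \<sigma> 1 s - s\<close> is additive with kernel \<open>F\<close>.\<close>
lemma card_roots_le_card_subF_mult: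
  assumes "v \<noteq> 0" "\<And>s. f (v * s) = g (\<sigma> 1 s - s)"
  shows "card {t. f t = 0} \<le> card F * card {w. g w = 0}"
proof -
  let ?D = "\<lambda>s. \<sigma> 1 s - s"
  have "{t. f t = 0} \<subseteq> (\<lambda>s. v * s) ` (?D -` {w. g w = 0})"
  proof
    fix t assume "t \<in> {t. f t = 0}"
    moreover have "f (v * (t / v)) = g (?D (t / v))" by (rule assms(2))
    ultimately show "t \<in> (\<lambda>s. v * s) ` (?D -` {w. g w = 0})"
      using assms(1) by (intro image_eqI[of _ _ "t / v"]) auto
  qed
  hence "card {t. f t = 0} \<le> card ((\<lambda>s. v * s) ` (?D -` {w. g w = 0}))"
    by (intro card_mono) simp_all
  also have "\<dots> \<le> card (?D -` {w. g w = 0})" by (rule card_image_le) simp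
  also have "\<dots> \<le> card {s. ?D s = 0} * card {w. g w = 0}"
    by (rule card_additive_vimage_le) (simp_all add: \<sigma>_add)
  also have "card {s. ?D s = 0} \<le> card F"
    by (rule card_mono) (auto intro: subF_if_\<sigma>_fixed)
  finally show ?thesis by simp
qed

text \<open>The analogue of the degree bound. Dividing by a nonzero root \<open>v\<close> turns the
  \<open>\<sigma>\<close>-polynomial into one with one coefficient less, evaluated at \<open>\<sigma> 1 s - s\<close>.\<close>
lemma card_sigma_poly_roots_le:
  assumes "\<exists>l\<le>n. \<gamma> l \<noteq> 0"
  shows "card {t. sigma_poly (Suc n) \<gamma> t = 0} \<le> card F ^ n"
  using assms
proof (induction n arbitrary: \<gamma>)
  case 0
  hence "{t. sigma_poly (Suc 0) \<gamma> t = 0} = {0}" by (auto simp: sigma_poly_def)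
  thus ?case by simp
next
  case (Suc n)
  let ?P = "sigma_poly (Suc (Suc n)) \<gamma>"
  show ?case
  proof (cases "\<exists>v. v \<noteq> 0 \<and> ?P v = 0")
    case False
    hence "{t. ?P t = 0} \<subseteq> {0}" by auto
    hence "card {t. ?P t = 0} \<le> card {0::'a}" by (intro card_mono) simp_all
    hence "card {t. ?P t = 0} \<le> 1" by simp
    moreover have "1 \<le> card F ^ Suc n" using card_subF_ge_1 by simp
    ultimately show ?thesis by (rule le_trans)
  next
    case True
    then obtain v where v: "v \<noteq> 0" "?P v = 0" by auto
    define q where "q i = (\<Sum>l=Suc i..Suc n. \<gamma> l * \<sigma> l v)" for i
    have "\<exists>i\<le>n. q i \<noteq> 0"
    proof (rule ccontr)
      assume "\<not> (\<exists>i\<le>n. q i \<noteq> 0)"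
      moreover have "(\<Sum>l=0..Suc n. \<gamma> l * \<sigma> l v) = 0"
        using v by (simp add: sigma_poly_def atLeast0AtMost lessThan_Suc_atMost)
      ultimately have "(\<Sum>l=j..Suc n. \<gamma> l * \<sigma> l v) = 0" if "j \<le> Suc n" for j
        using that by (cases j) (auto simp: q_def)
      hence "\<gamma> l * \<sigma> l v = 0" if "l \<le> Suc n" for l
        using that by (rule suffix_sums_eq_0_imp_eq_0)
      thus False using Suc.prems v by auto
    qed
    hence IH: "card {w. sigma_poly (Suc n) q w = 0} \<le> card F ^ n" by (rule Suc.IH)
    have "card {t. ?P t = 0} \<le> card F * card {w. sigma_poly (Suc n) q w = 0}"
      using v(1) unfolding q_def by (rule card_roots_le_card_subF_mult) (rule sigma_poly_mult_root[OF v(2)])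
    also have "\<dots> \<le> card F * card F ^ n" using IH by simp
    finally show ?thesis by simp
  qed
qed

lemma card_roots_comp_\<sigma>: "card {t. f (\<sigma> a t) = 0} = card {t. f t = 0}"
proof -
  have "inj (\<sigma> a)" by (auto intro: injI \<sigma>_inj)
  moreover from this have "surj (\<sigma> a)" by (rule finite_UNIV_inj_surj[rotated]) simp
  ultimately show ?thesis using card_vimage_inj[of "\<sigma> a" "{t. f t = 0}"] by (simp add: vimage_def)
qed

lemma sigma_poly_rotate:
  assumes "\<And>k. \<gamma> (k + M) = \<gamma> k"
  shows "sigma_poly M \<gamma> t = sigma_poly M (\<lambda>l. \<gamma> (a + l)) (\<sigma> a t)"
proof -
  have "(\<Sum>l<M. \<gamma> (a + l) * \<sigma> (a + l) t) = (\<Sum>k<M. \<gamma> k * \<sigma> k t)"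
    by (rule sum_lessThan_shift_periodic) (simp add: assms \<sigma>_add_M)
  thus ?thesis by (simp add: sigma_poly_def \<sigma>_\<sigma> add.commute)
qed

lemma sigma_poly_truncate:
  assumes "\<And>l. L \<le> l \<Longrightarrow> l < M \<Longrightarrow> \<gamma> l = 0" "L \<le> M"
  shows "sigma_poly M \<gamma> t = sigma_poly L \<gamma> t"
  unfolding sigma_poly_def using assms by (intro sum.mono_neutral_right) auto

text \<open>Substituting \<open>\<sigma> a t\<close> moves the gap to the end, leaving \<open>L\<close> coefficients.\<close>
lemma card_sigma_poly_roots_gap:
  assumes periodic: "\<And>k. \<gamma> (k + M) = \<gamma> k"
    and gap: "\<And>l. L \<le> l \<Longrightarrow> l < M \<Longrightarrow> \<gamma> (a + l) = 0" and "L \<le> M"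
    and nz: "k < M" "\<gamma> k \<noteq> 0"
  shows "card {t. sigma_poly M \<gamma> t = 0} \<le> card F ^ (L - 1)"
proof -
  define l where "l = (k + (M - a mod M)) mod M"
  have "(a + l) mod M = (a + (k + (M - a mod M))) mod M" by (simp add: l_def mod_add_right_eq)
  also have "a + (k + (M - a mod M)) = k + Suc (a div M) * M"
    using div_mult_mod_eq[of a M] mod_less_divisor[OF M_pos, of a] by (simp only: mult_Suc)
  finally have "(a + l) mod M = k" using \<open>k < M\<close> by (simp only: mod_mult_self1 mod_less)
  have "\<gamma> (a + l) = \<gamma> ((a + l) mod M + (a + l) div M * M)" by simp
  also have "\<dots> = \<gamma> k" using periodic_add_mult[where g = \<gamma>, OF periodic] \<open>(a + l) mod M = k\<close> by simp
  finally have "\<gamma> (a + l) = \<gamma> k" .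
  moreover have "l < M" using M_pos by (simp add: l_def)
  ultimately have "l < L" using nz gap[of l] by (cases "L \<le> l") auto
  have "card {t. sigma_poly M \<gamma> t = 0} = card {t. sigma_poly L (\<lambda>l. \<gamma> (a + l)) (\<sigma> a t) = 0}"
    using sigma_poly_rotate[where \<gamma> = \<gamma> and a = a, OF periodic]
      sigma_poly_truncate[OF gap \<open>L \<le> M\<close>] by simp
  also have "\<dots> = card {w. sigma_poly L (\<lambda>l. \<gamma> (a + l)) w = 0}" by (rule card_roots_comp_\<sigma>)
  also have "\<dots> \<le> card F ^ (L - 1)"
  proof -
    have "\<exists>i\<le>L - 1. \<gamma> (a + i) \<noteq> 0"
      using \<open>l < L\<close> \<open>\<gamma> (a + l) = \<gamma> k\<close> nz by (intro exI[of _ l]) simp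
    moreover have "Suc (L - 1) = L" using \<open>l < L\<close> by simp
    ultimately show ?thesis using card_sigma_poly_roots_le[of "L - 1" "\<lambda>l. \<gamma> (a + l)"] by simp
  qed
  finally show ?thesis .
qed

definition trace :: "'a \<Rightarrow> 'a" where
  "trace t = (\<Sum>k<M. \<sigma> k t)"

lemma trace_in_subF: "trace t \<in> F"
proof (rule subF_if_\<sigma>_fixed)
  have "\<sigma> 1 (trace t) = (\<Sum>k<M. \<sigma> (Suc k) t)" by (simp add: trace_def \<sigma>_sum \<sigma>_\<sigma>)
  also have "\<dots> = trace t"
    using sum.lessThan_Suc_shift[of "\<lambda>k. \<sigma> k t" M] by (simp add: trace_def \<sigma>_M)
  finally show "\<sigma> 1 (trace t) = trace t" .
qed

lemma trace_add: "trace (a + b) = trace a + trace b"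
  by (simp add: trace_def \<sigma>_add sum.distrib)

lemma trace_diff: "trace (a - b) = trace a - trace b"
  by (simp add: trace_def \<sigma>_diff sum_subtractf)

lemma trace_scale: "c \<in> F \<Longrightarrow> trace (c * a) = c * trace a"
  by (simp add: trace_def \<sigma>_mult \<sigma>_subF sum_distrib_left)

lemma trace_sum: "trace (sum g I) = (\<Sum>i\<in>I. trace (g i))"
  unfolding trace_def \<sigma>_sum by (rule sum.swap)

lemma card_trace_kernel_le: "card {t. trace t = 0} \<le> card F ^ (M - 1)"
proof -
  have "{t. trace t = 0} = {t. sigma_poly (Suc (M - 1)) (\<lambda>_. 1) t = 0}"
    using M_pos by (simp add: trace_def sigma_poly_def)
  thus ?thesis using card_sigma_poly_roots_le[of "M - 1" "\<lambda>_. 1"] by auto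
qed

text \<open>The trace takes values in \<open>F\<close> and has at most \<open>card F ^ (M - 1)\<close> roots, so
  \<open>2 ^ m \<le> card F ^ M\<close>; on the other hand \<open>F\<close> consists of roots of \<open>x ^ 2 ^ e - x\<close>.\<close>
lemma card_subF: "card F = 2 ^ e"
  and card_UNIV_eq_card_subF_power: "card (UNIV :: 'a set) = card F ^ M"
proof -
  have "card (UNIV :: 'a set) = card {t. trace t = 0} * card (range trace)"
    by (rule card_UNIV_eq_card_kernel_mult_card_range) (rule trace_add)
  also have "\<dots> \<le> card F ^ (M - 1) * card F"
    by (intro mult_le_mono card_trace_kernel_le card_mono) (auto simp: trace_in_subF)
  also have "\<dots> = card F ^ M" using M_pos by (cases M) auto
  finally have "(2 ^ e) ^ Suc (M - 1) \<le> card F ^ Suc (M - 1)"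
    using card_field m_eq M_pos by (simp add: power_mult)
  hence "2 ^ e \<le> card F" by (rule power_le_imp_le_base) simp
  thus "card F = 2 ^ e" using card_subF_le by simp
  thus "card (UNIV :: 'a set) = card F ^ M" using card_field m_eq by (simp add: power_mult)
qed

lemma card_subF_gt_1: "card F > 1"
  using card_subF e_pos one_less_power[of "2::nat" e] by simp

lemma trace_nonzero: "\<exists>r. trace r \<noteq> 0"
proof (rule ccontr)
  assume "\<nexists>r. trace r \<noteq> 0"
  hence "card F ^ M \<le> card F ^ (M - 1)"
    using card_trace_kernel_le card_UNIV_eq_card_subF_power by simp
  thus False using M_pos card_subF_gt_1 by simp
qed

lemma trace_mult_sum:
  "(\<And>j. j \<in> J \<Longrightarrow> c j \<in> F) \<Longrightarrow> trace (z * (\<Sum>j\<in>J. c j * v j)) = (\<Sum>j\<in>J. c j * trace (z * v j))"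
proof -
  assume c: "\<And>j. j \<in> J \<Longrightarrow> c j \<in> F"
  have "trace (z * (\<Sum>j\<in>J. c j * v j)) = (\<Sum>j\<in>J. trace (c j * (z * v j)))"
    by (simp add: sum_distrib_left trace_sum mult.left_commute)
  also have "\<dots> = (\<Sum>j\<in>J. c j * trace (z * v j))" using c by (simp add: trace_scale)
  finally show ?thesis .
qed

lemma trace_form_surj: "w \<noteq> 0 \<Longrightarrow> \<exists>s. trace (w * s) = 1"
proof -
  assume "w \<noteq> 0"
  obtain r where r: "trace r \<noteq> 0" using trace_nonzero by blast
  have "w * (r / (trace r * w)) = inverse (trace r) * r" using \<open>w \<noteq> 0\<close> r by (simp add: field_simps)
  hence "trace (w * (r / (trace r * w))) = 1"
    using r trace_in_subF by (simp add: trace_scale subF_def power_inverse)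
  thus ?thesis by blast
qed

subsection \<open>Linear independence over the fixed field\<close>

definition indep :: "nat \<Rightarrow> (nat \<Rightarrow> 'a) \<Rightarrow> bool" where
  "indep u y \<longleftrightarrow> (\<forall>c. (\<forall>i<u. c i \<in> F) \<longrightarrow> (\<Sum>i<u. c i * y i) = 0 \<longrightarrow> (\<forall>i<u. c i = 0))"

definition span :: "nat \<Rightarrow> (nat \<Rightarrow> 'a) \<Rightarrow> 'a set" where
  "span u y = (\<lambda>c. \<Sum>i<u. c i * y i) ` (\<Pi>\<^sub>E i\<in>{..<u}. F)"

lemma indep_cong: "(\<And>i. i < u \<Longrightarrow> y i = y' i) \<Longrightarrow> indep u y = indep u y'"
  unfolding indep_def by (metis (no_types, lifting) lessThan_iff sum.cong)

lemma span_cong: "(\<And>i. i < u \<Longrightarrow> y i = y' i) \<Longrightarrow> span u y = span u y'"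
  unfolding span_def by (intro image_cong) (auto intro: sum.cong)

lemma indep_coeffs_eq:
  assumes "indep u y" "\<And>i. i < u \<Longrightarrow> c i \<in> F" "\<And>i. i < u \<Longrightarrow> c' i \<in> F"
    and "(\<Sum>i<u. c i * y i) = (\<Sum>i<u. c' i * y i)" "i < u"
  shows "c i = c' i"
proof -
  have "(\<Sum>i<u. (c i - c' i) * y i) = 0" using assms(4) by (simp add: algebra_simps sum_subtractf)
  moreover have "\<forall>i<u. c i - c' i \<in> F" using assms(2,3) by (simp add: subF_diff)
  ultimately show ?thesis using assms(1,5) unfolding indep_def by force
qed

lemma card_span: "indep u y \<Longrightarrow> card (span u y) = card F ^ u"
proof -
  assume "indep u y"
  hence "inj_on (\<lambda>c. \<Sum>i<u. c i * y i) (\<Pi>\<^sub>E i\<in>{..<u}. F)"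
    by (intro inj_onI PiE_ext) (auto intro: indep_coeffs_eq)
  thus ?thesis by (simp add: span_def card_image card_PiE)
qed

lemma indep_SucD:
  assumes ind: "indep (Suc u) y"
  shows "indep u y" and "y u \<notin> span u y"
proof -
  show "indep u y" unfolding indep_def
  proof (intro allI impI)
    fix c i assume c: "\<forall>i<u. c i \<in> F" "(\<Sum>i<u. c i * y i) = 0" and "i < u"
    have "(\<Sum>i<Suc u. (c(u := 0)) i * y i) = 0" using c by (simp add: sum_lessThan_Suc_fun_upd)
    moreover have "\<forall>i<Suc u. (c(u := 0)) i \<in> F" using c by (simp add: less_Suc_eq)
    ultimately have "\<forall>i<Suc u. (c(u := 0)) i = 0" using ind unfolding indep_def by blast
    thus "c i = 0" using \<open>i < u\<close> by (auto dest: spec[of _ i])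
  qed
  show "y u \<notin> span u y"
  proof
    assume "y u \<in> span u y"
    then obtain c where c: "c \<in> (\<Pi>\<^sub>E i\<in>{..<u}. F)" and yu: "y u = (\<Sum>i<u. c i * y i)"
      unfolding span_def by blast
    have "(\<Sum>i<Suc u. (c(u := - 1)) i * y i) = 0" using yu by (simp add: sum_lessThan_Suc_fun_upd)
    moreover have "\<forall>i<Suc u. (c(u := - 1)) i \<in> F"
      using c by (auto simp: less_Suc_eq uminus_CHAR_2[OF CHAR_eq_2])
    ultimately have "\<forall>i<Suc u. (c(u := - 1)) i = 0" using ind unfolding indep_def by blast
    thus False by (auto dest: spec[of _ u])
  qed
qed

lemma indep_SucI:
  assumes ind: "indep u y" and notin: "y u \<notin> span u y"
  shows "indep (Suc u) y"
  unfolding indep_def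
proof (intro allI impI)
  fix c i assume cF: "\<forall>i<Suc u. c i \<in> F" and s: "(\<Sum>i<Suc u. c i * y i) = 0" and i: "i < Suc u"
  have cu: "c u = 0"
  proof (rule ccontr)
    assume "c u \<noteq> 0"
    have "c u * y u = - (\<Sum>i<u. c i * y i)"
      using s by (simp add: eq_neg_iff_add_eq_0 add.commute)
    hence "y u = - (inverse (c u) * (\<Sum>i<u. c i * y i))"
      using \<open>c u \<noteq> 0\<close> by (simp add: field_simps)
    also have "\<dots> = (\<Sum>i<u. restrict (\<lambda>i. - c i / c u) {..<u} i * y i)"
      by (simp add: sum_distrib_left sum_negf divide_inverse mult_ac)
    finally have "y u = \<dots>" .
    moreover have "restrict (\<lambda>i. - c i / c u) {..<u} \<in> (\<Pi>\<^sub>E i\<in>{..<u}. F)"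
      using cF by (auto simp: uminus_CHAR_2[OF CHAR_eq_2] intro: subF_divide)
    ultimately show False using notin unfolding span_def by blast
  qed
  hence "\<forall>i<u. c i = 0" using ind cF s unfolding indep_def by simp
  thus "c i = 0" using cu i less_Suc_eq by auto
qed

lemma indep_Suc_iff: "indep (Suc u) y \<longleftrightarrow> indep u y \<and> y u \<notin> span u y"
  using indep_SucD indep_SucI by blast

definition indep_tuples :: "nat \<Rightarrow> (nat \<Rightarrow> 'a) set" where
  "indep_tuples u = {y. indep u y \<and> (\<forall>i\<ge>u. y i = 0)}"

lemma finite_indep_tuples: "finite (indep_tuples u)"
  by (rule finite_subset[OF _ finite_funs_vanishing_from[of u]]) (auto simp: indep_tuples_def)

lemma indep_tuples_Suc:
  "indep_tuples (Suc u) = (\<lambda>(y, v). y(u := v)) ` (SIGMA y:indep_tuples u. UNIV - span u y)"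
proof (intro set_eqI iffI)
  fix z assume z: "z \<in> indep_tuples (Suc u)"
  have "indep u (z(u := 0)) = indep u z" by (rule indep_cong) simp
  moreover have "span u (z(u := 0)) = span u z" by (rule span_cong) simp
  ultimately
  have "z(u := 0) \<in> indep_tuples u" "z u \<notin> span u (z(u := 0))"
    using z indep_Suc_iff[of u z] by (auto simp: indep_tuples_def)
  thus "z \<in> (\<lambda>(y, v). y(u := v)) ` (SIGMA y:indep_tuples u. UNIV - span u y)"
    by (intro rev_image_eqI[of "(z(u := 0), z u)"]) auto
next
  fix z assume "z \<in> (\<lambda>(y, v). y(u := v)) ` (SIGMA y:indep_tuples u. UNIV - span u y)"
  then obtain y v where y: "y \<in> indep_tuples u" and v: "v \<notin> span u y" and z: "z = y(u := v)"
    by auto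
  have "indep u z = indep u y" unfolding z by (rule indep_cong) simp
  moreover have "span u z = span u y" unfolding z by (rule span_cong) simp
  ultimately show "z \<in> indep_tuples (Suc u)"
    using y v z indep_Suc_iff[of u z] by (auto simp: indep_tuples_def)
qed

lemma card_indep_tuples:
  "card (indep_tuples u) = (\<Prod>i<u. card (UNIV :: 'a set) - card F ^ i)"
proof (induction u)
  case 0
  have "indep_tuples 0 = {\<lambda>_. 0}" by (auto simp: indep_tuples_def indep_def)
  thus ?case by simp
next
  case (Suc u)
  have "inj_on (\<lambda>(y, v). y(u := v)) (SIGMA y:indep_tuples u. UNIV - span u y)"
  proof (rule inj_onI, clarify)
    fix y v y' v' assume y: "y \<in> indep_tuples u" "y' \<in> indep_tuples u"
      and eq: "y(u := v) = y'(u := v')"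
    have "y i = y' i" for i
    proof (cases "i = u")
      case False thus ?thesis using fun_cong[OF eq, of i] by simp
    qed (use y in \<open>simp add: indep_tuples_def\<close>)
    thus "y = y' \<and> v = v'" using fun_cong[OF eq, of u] by auto
  qed
  hence "card (indep_tuples (Suc u)) = card (SIGMA y:indep_tuples u. UNIV - span u y)"
    unfolding indep_tuples_Suc by (rule card_image)
  also have "\<dots> = (\<Sum>y\<in>indep_tuples u. card (UNIV - span u y))"
    by (rule card_SigmaI) (simp_all add: finite_indep_tuples)
  also have "\<dots> = (\<Sum>y\<in>indep_tuples u. card (UNIV :: 'a set) - card F ^ u)"
    by (intro sum.cong) (auto simp: indep_tuples_def card_Diff_subset card_span)
  finally show ?case using Suc.IH by simp
qed

text \<open>Subtracting from \<open>y u\<close> its projection \<open>w\<close> onto the first \<open>u\<close> vectors and correcting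
  an \<open>s\<close> with \<open>trace (w * s) = 1\<close> by the dual vectors \<open>\<tau> j\<close>.\<close>
lemma trace_dual_vector:
  assumes \<tau>: "\<forall>i<u. \<forall>j<u. trace (y i * \<tau> j) = (if i = j then 1 else 0)"
    and "y u \<notin> span u y"
  shows "\<exists>t. (\<forall>i<u. trace (y i * t) = 0) \<and> trace (y u * t) = 1"
proof -
  define w where "w = y u - (\<Sum>j<u. trace (y u * \<tau> j) * y j)"
  have "w \<noteq> 0"
  proof
    assume "w = 0"
    hence "y u \<in> span u y"
      unfolding span_def w_def
      by (intro rev_image_eqI[of "restrict (\<lambda>j. trace (y u * \<tau> j)) {..<u}"])
         (auto simp: trace_in_subF)
    thus False using assms(2) by blast
  qed
  then obtain s where s: "trace (w * s) = 1" using trace_form_surj by blast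
  define t where "t = s - (\<Sum>j<u. trace (y j * s) * \<tau> j)"
  have "trace (y i * t) = 0" if "i < u" for i
  proof -
    have "(\<Sum>j<u. trace (y j * s) * trace (y i * \<tau> j))
        = (\<Sum>j<u. trace (y j * s) * (if i = j then 1 else 0))"
      using \<tau> that by (intro sum.cong) auto
    thus ?thesis using that
      by (simp add: t_def right_diff_distrib trace_diff trace_mult_sum trace_in_subF
          sum_lessThan_mult_delta)
  qed
  moreover have "trace (y u * t) = 1"
  proof -
    have "trace (y u * t) = trace (y u * s) - (\<Sum>j<u. trace (y j * s) * trace (y u * \<tau> j))"
      unfolding t_def right_diff_distrib trace_diff by (simp add: trace_mult_sum trace_in_subF)
    also have "(\<Sum>j<u. trace (y j * s) * trace (y u * \<tau> j))
        = (\<Sum>j<u. trace (y u * \<tau> j) * trace (s * y j))"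
      by (simp add: mult.commute)
    also have "trace (y u * s) - \<dots> = trace (s * w)"
      unfolding w_def right_diff_distrib trace_diff
      by (subst trace_mult_sum) (simp_all add: trace_in_subF mult.commute)
    finally show ?thesis using s by (simp add: mult.commute)
  qed
  ultimately show ?thesis by blast
qed

lemma trace_dual_basis:
  "indep u y \<Longrightarrow> \<exists>\<tau>. \<forall>i<u. \<forall>j<u. trace (y i * \<tau> j) = (if i = j then 1 else 0)"
proof (induction u)
  case (Suc u)
  from Suc.IH obtain \<tau> where \<tau>: "\<forall>i<u. \<forall>j<u. trace (y i * \<tau> j) = (if i = j then 1 else 0)"
    using Suc.prems indep_Suc_iff by blast
  moreover have "y u \<notin> span u y" using Suc.prems indep_Suc_iff by blast
  ultimately obtain t where t: "\<forall>i<u. trace (y i * t) = 0" "trace (y u * t) = 1"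
    using trace_dual_vector by blast
  define \<tau>' where "\<tau>' j = (if j < u then \<tau> j - trace (y u * \<tau> j) * t else t)" for j
  have low: "trace (y i * \<tau>' j) = trace (y i * \<tau> j) - trace (y u * \<tau> j) * trace (y i * t)"
    if "j < u" for i j
  proof -
    have comm: "y i * (trace (y u * \<tau> j) * t) = trace (y u * \<tau> j) * (y i * t)"
      by (simp add: mult_ac)
    show ?thesis
      using that by (simp add: \<tau>'_def right_diff_distrib trace_diff comm trace_scale trace_in_subF)
  qed
  have "trace (y i * \<tau>' j) = (if i = j then 1 else 0)" if "i < Suc u" "j < Suc u" for i j
  proof (cases "j < u")
    case True
    thus ?thesis using that \<tau> t by (cases "i < u") (auto simp: low less_Suc_eq)
  next
    case False
    thus ?thesis using that t by (auto simp: \<tau>'_def less_Suc_eq)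
  qed
  thus ?case by blast
qed simp

subsection \<open>The equations of \<open>V\<close>\<close>

definition beta :: "nat \<Rightarrow> (nat \<Rightarrow> 'a) \<Rightarrow> (nat \<Rightarrow> 'a) \<Rightarrow> nat \<Rightarrow> 'a" where
  "beta u x y k = (\<Sum>i<u. x i * \<sigma> k (y i) + \<sigma> k (x i) * y i)"

lemma beta_add_M: "beta u x y (k + M) = beta u x y k"
  by (simp add: beta_def \<sigma>_add_M)

lemma beta_mod: "beta u x y (k mod M) = beta u x y k"
  by (simp add: beta_def flip: \<sigma>_mod)

lemma beta_reflect: "k \<le> M \<Longrightarrow> beta u x y (M - k) = \<sigma> (M - k) (beta u x y k)"
proof -
  assume "k \<le> M"
  hence "\<sigma> (M - k) (\<sigma> k z) = z" for z by (simp add: \<sigma>_\<sigma> \<sigma>_M)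
  thus ?thesis by (simp add: beta_def \<sigma>_sum \<sigma>_add \<sigma>_mult algebra_simps)
qed

lemma sigma_poly_beta:
  "sigma_poly M (beta u x y) t = (\<Sum>i<u. x i * trace (y i * t) + y i * trace (x i * t))"
proof -
  have "sigma_poly M (beta u x y) t = (\<Sum>k<M. \<Sum>i<u. (x i * \<sigma> k (y i) + \<sigma> k (x i) * y i) * \<sigma> k t)"
    by (simp add: sigma_poly_def beta_def sum_distrib_right)
  also have "\<dots> = (\<Sum>i<u. \<Sum>k<M. (x i * \<sigma> k (y i) + \<sigma> k (x i) * y i) * \<sigma> k t)"
    by (rule sum.swap)
  also have "\<dots> = (\<Sum>i<u. x i * trace (y i * t) + y i * trace (x i * t))"
    by (simp add: trace_def \<sigma>_mult sum_distrib_left sum.distrib algebra_simps)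
  finally show ?thesis .
qed

text \<open>By the trace formula, the map \<open>t \<mapsto> sigma_poly M (beta u x y) t\<close> takes values in the
  \<open>F\<close>-span of the \<open>2 u\<close> elements \<open>x i\<close>, \<open>y i\<close>.\<close>
lemma card_range_sigma_poly_beta_le: "card (range (sigma_poly M (beta u x y))) \<le> card F ^ (2 * u)"
proof -
  let ?S = "(\<Pi>\<^sub>E i\<in>{..<u}. F) \<times> (\<Pi>\<^sub>E i\<in>{..<u}. F)"
  let ?comb = "\<lambda>(a, b). \<Sum>i<u. a i * x i + b i * y i"
  have "range (sigma_poly M (beta u x y)) \<subseteq> ?comb ` ?S"
  proof
    fix z assume "z \<in> range (sigma_poly M (beta u x y))"
    then obtain t where z: "z = (\<Sum>i<u. x i * trace (y i * t) + y i * trace (x i * t))"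
      by (auto simp: sigma_poly_beta)
    let ?a = "restrict (\<lambda>i. trace (y i * t)) {..<u}" and ?b = "restrict (\<lambda>i. trace (x i * t)) {..<u}"
    have "z = ?comb (?a, ?b)" unfolding z by (auto intro: sum.cong simp: mult.commute)
    moreover have "(?a, ?b) \<in> ?S" by (auto simp: trace_in_subF)
    ultimately show "z \<in> ?comb ` ?S" by blast
  qed
  hence "card (range (sigma_poly M (beta u x y))) \<le> card (?comb ` ?S)"
    by (intro card_mono) simp_all
  also have "\<dots> \<le> card ?S" by (intro card_image_le finite_SigmaI finite_PiE) simp_all
  also have "card ?S = card F ^ u * card F ^ u" by (simp add: card_cartesian_product card_PiE)
  finally show ?thesis by (simp add: mult_2 power_add)
qed

text \<open>If \<open>beta u x y\<close> vanished on the window \<open>[N - s, N + s]\<close> but not everywhere, the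
  \<open>\<sigma>\<close>-polynomial with coefficients \<open>beta u x y\<close> would have a kernel of size at most
  \<open>card F ^ (M - 2 s - 2)\<close>; its range has size at most \<open>card F ^ (2 u)\<close>, and
  \<open>2 u \<le> 2 s\<close> leaves too few elements for the whole field.\<close>
lemma beta_eq_0_if_eq_0_on_window:
  assumes M_eq: "M = 2 * N" and "u \<le> s"
    and window: "\<And>k. N - s \<le> k \<Longrightarrow> k \<le> N + s \<Longrightarrow> k < M \<Longrightarrow> beta u x y k = 0"
  shows "beta u x y k = 0"
proof (rule ccontr)
  assume "beta u x y k \<noteq> 0"
  hence nz: "k mod M < M" "beta u x y (k mod M) \<noteq> 0" using M_pos by (simp_all add: beta_mod)
  have "s < N"
  proof (rule ccontr)
    assume "\<not> s < N"
    hence "N - s \<le> k mod M" "k mod M \<le> N + s" using nz(1) M_eq by auto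
    thus False using window nz by blast
  qed
  define L where "L = M - 2 * s - 1"
  have "L \<le> M" unfolding L_def by arith
  have gap: "beta u x y (N + s + 1 + l) = 0" if "L \<le> l" "l < M" for l
  proof -
    let ?k = "N + s + 1 + l - M"
    have ge: "M \<le> N + s + 1 + l" and lt: "?k < M" and win: "N - s \<le> ?k" "?k \<le> N + s"
      using that \<open>s < N\<close> unfolding L_def M_eq by arith+
    have "beta u x y (N + s + 1 + l) = beta u x y ((N + s + 1 + l) mod M)" by (simp add: beta_mod)
    also have "(N + s + 1 + l) mod M = ?k" using ge lt by (simp add: le_mod_geq)
    finally show ?thesis using window[OF win lt] by simp
  qed
  have kernel: "card {t. sigma_poly M (beta u x y) t = 0} \<le> card F ^ (L - 1)"
  proof (rule card_sigma_poly_roots_gap)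
    show "beta u x y (k + M) = beta u x y k" for k by (rule beta_add_M)
    show "beta u x y (N + s + 1 + l) = 0" if "L \<le> l" "l < M" for l using that by (rule gap)
  qed (use \<open>L \<le> M\<close> nz in auto)
  have "card F ^ M
      = card {t. sigma_poly M (beta u x y) t = 0} * card (range (sigma_poly M (beta u x y)))"
    using card_UNIV_eq_card_subF_power
      card_UNIV_eq_card_kernel_mult_card_range[of "sigma_poly M (beta u x y)"]
    by (simp add: sigma_poly_add)
  also have "\<dots> \<le> card F ^ (L - 1) * card F ^ (2 * u)"
    by (rule mult_le_mono[OF kernel card_range_sigma_poly_beta_le])
  finally have "card F ^ M \<le> card F ^ (L - 1 + 2 * u)" by (simp add: power_add)
  hence "M \<le> L - 1 + 2 * u" by (rule power_le_imp_le_exp[OF card_subF_gt_1])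
  thus False using \<open>u \<le> s\<close> \<open>s < N\<close> unfolding L_def M_eq by arith
qed

text \<open>The defining equations of \<open>V\<close> are \<open>beta\<close> at \<open>N - j\<close> for \<open>j \<le> s\<close>; by
  \<open>beta_reflect\<close> they also give \<open>beta\<close> at \<open>N + j\<close>.\<close>
lemma beta_vanishes_iff:
  assumes M_eq: "M = 2 * N" and "u \<le> s"
  shows "(\<forall>j\<in>{0..s}. beta u x y (nat ((int N - int j) mod int M)) = 0)
           \<longleftrightarrow> (\<forall>k. beta u x y k = 0)"
proof
  assume H: "\<forall>j\<in>{0..s}. beta u x y (nat ((int N - int j) mod int M)) = 0"
  have "beta u x y k = 0" if "N - s \<le> k" "k \<le> N + s" "k < M" for k
  proof (cases "k \<le> N")
    case True
    have "nat ((int N - int (N - k)) mod int M) = k" using True that by simp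
    moreover have "N - k \<in> {0..s}" using that by simp
    ultimately show ?thesis using H by metis
  next
    case False
    have "int N - int (k - N) = int (M - k)" "M - k < M" using False that M_eq by auto
    hence "nat ((int N - int (k - N)) mod int M) = M - k" by (simp flip: of_nat_mod)
    moreover have "k - N \<in> {0..s}" using that by simp
    ultimately have "beta u x y (M - k) = 0" using H by metis
    hence "beta u x y (M - (M - k)) = 0" using beta_reflect[of "M - k"] by simp
    thus ?thesis using that by simp
  qed
  thus "\<forall>k. beta u x y k = 0" using beta_eq_0_if_eq_0_on_window[OF M_eq \<open>u \<le> s\<close>] by blast
qed simp

lemma beta_eq_0_imp_symmetric_coords:
  assumes ind: "indep u y" and beta0: "\<And>k. beta u x y k = 0"
  shows "\<exists>C. (\<forall>i j. C i j \<in> F) \<and> (\<forall>i<u. \<forall>j<u. C i j = C j i) \<and>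
              (\<forall>j<u. x j = (\<Sum>i<u. C j i * y i))"
proof -
  obtain \<tau> where \<tau>: "\<forall>i<u. \<forall>j<u. trace (y i * \<tau> j) = (if i = j then 1 else 0)"
    using trace_dual_basis[OF ind] by blast
  have sym: "(\<Sum>i<u. x i * trace (y i * t)) = (\<Sum>i<u. y i * trace (x i * t))" for t
  proof -
    have "(\<Sum>i<u. x i * trace (y i * t)) + (\<Sum>i<u. y i * trace (x i * t)) = 0"
      using beta0 sigma_poly_beta[of u x y t] by (simp add: sigma_poly_def sum.distrib)
    thus ?thesis by (simp add: eq_neg_iff_add_eq_0[symmetric] uminus_CHAR_2[OF CHAR_eq_2])
  qed
  define C where "C j i = trace (x i * \<tau> j)" for j i
  have coords: "x j = (\<Sum>i<u. C j i * y i)" if "j < u" for j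
  proof -
    have "x j = (\<Sum>i<u. x i * (if j = i then 1 else 0))"
      using sum_lessThan_mult_delta[OF that, of x] by simp
    also have "\<dots> = (\<Sum>i<u. x i * trace (y i * \<tau> j))" using \<tau> that by (intro sum.cong) auto
    also have "\<dots> = (\<Sum>i<u. y i * trace (x i * \<tau> j))" by (rule sym)
    also have "\<dots> = (\<Sum>i<u. C j i * y i)" by (simp add: C_def mult.commute)
    finally show ?thesis .
  qed
  have "C i j = C j i" if "i < u" "j < u" for i j
  proof -
    have "C j i = trace (\<tau> j * (\<Sum>l<u. C i l * y l))"
      using coords[OF that(1)] by (simp add: C_def mult.commute)
    also have "\<dots> = (\<Sum>l<u. C i l * trace (\<tau> j * y l))"
      by (rule trace_mult_sum) (simp add: C_def trace_in_subF)
    also have "\<dots> = (\<Sum>l<u. C i l * (if j = l then 1 else 0))"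
      using \<tau> that by (intro sum.cong) (auto simp: mult.commute)
    finally show ?thesis using that by (simp add: sum_lessThan_mult_delta)
  qed
  thus ?thesis using coords by (intro exI[of _ C]) (auto simp: C_def trace_in_subF)
qed

lemma beta_eq_0_if_symmetric_coords:
  assumes CF: "\<And>i j. C i j \<in> F" and sym: "\<And>i j. i < u \<Longrightarrow> j < u \<Longrightarrow> C i j = C j i"
    and coords: "\<And>j. j < u \<Longrightarrow> x j = (\<Sum>i<u. C j i * y i)"
  shows "beta u x y k = 0"
proof -
  have "(\<Sum>i<u. \<sigma> k (x i) * y i) = (\<Sum>i<u. \<Sum>j<u. C i j * \<sigma> k (y j) * y i)"
    using coords by (intro sum.cong) (simp_all add: \<sigma>_sum \<sigma>_mult \<sigma>_subF CF sum_distrib_right)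
  also have "\<dots> = (\<Sum>j<u. \<Sum>i<u. C i j * \<sigma> k (y j) * y i)" by (rule sum.swap)
  also have "\<dots> = (\<Sum>j<u. \<Sum>i<u. C j i * y i * \<sigma> k (y j))"
    using sym by (intro sum.cong) (simp_all add: mult_ac)
  also have "\<dots> = (\<Sum>j<u. x j * \<sigma> k (y j))"
    using coords by (intro sum.cong) (simp_all add: sum_distrib_right)
  finally show ?thesis
    by (simp add: beta_def sum.distrib add_self_CHAR_2[OF CHAR_eq_2])
qed

lemma frob_mult_d: "frob m (k * int d) z = \<sigma> (nat (k mod int M)) z"
proof -
  obtain c where d: "d = e * c" using gcd_dvd1[of d m] gcd_d_m by (auto elim!: dvdE)
  have mod_eq: "(j * int d) mod int m = int e * ((j * int c) mod int M)" for j
  proof -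
    have "(j * int d) mod int m = (int e * (j * int c)) mod (int e * int M)"
      by (simp add: d m_eq mult_ac)
    thus ?thesis by (simp only: mod_mult_mult1)
  qed
  have "(k * int d) mod int m = ((k mod int M) * int d) mod int m"
    unfolding mod_eq by (simp add: mod_mult_left_eq)
  thus ?thesis using M_pos m_pos by (simp add: frob_def \<sigma>_def nat_mod_distrib nat_mult_distrib)
qed

lemma V_equation:
  "(\<Sum>i=1..u. xs ! (2 * i - 2) * frob m (k * int d) (xs ! (2 * i - 1))
      + frob m (k * int d) (xs ! (2 * i - 2)) * xs ! (2 * i - 1))
   = beta u (pair_fst u xs) (pair_snd u xs) (nat (k mod int M))"
  unfolding beta_def frob_mult_d One_nat_def sum.atLeast1_atMost_eq
  by (intro sum.cong) (auto simp: pair_fst_def pair_snd_def)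

lemma V0_coeff_condition_iff:
  "{c. (\<forall>i. c i \<in> F) \<and> (\<forall>i. i \<notin> {1..u} \<longrightarrow> c i = 0) \<and> (\<Sum>i=1..u. c i * xs ! (2 * i - 1)) = 0}
     = {\<lambda>_. 0} \<longleftrightarrow> indep u (pair_snd u xs)"
proof -
  have sum_eq: "(\<Sum>i=1..u. c i * xs ! (2 * i - 1)) = (\<Sum>i<u. c (Suc i) * pair_snd u xs i)" for c
    unfolding One_nat_def sum.atLeast1_atMost_eq by (intro sum.cong) (auto simp: pair_snd_def)
  let ?P = "\<lambda>c. (\<forall>i. c i \<in> F) \<and> (\<forall>i. i \<notin> {1..u} \<longrightarrow> c i = 0) \<and>
                 (\<Sum>i<u. c (Suc i) * pair_snd u xs i) = 0"
  have "?P (\<lambda>_. 0)" by simp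
  hence "{c. ?P c} = {\<lambda>_. 0} \<longleftrightarrow> (\<forall>c. ?P c \<longrightarrow> c = (\<lambda>_. 0))" by blast
  also have "\<dots> \<longleftrightarrow> indep u (pair_snd u xs)"
  proof
    assume H: "\<forall>c. ?P c \<longrightarrow> c = (\<lambda>_. 0)"
    show "indep u (pair_snd u xs)" unfolding indep_def
    proof (intro allI impI)
      fix c' :: "nat \<Rightarrow> 'a" and i
      assume c': "\<forall>i<u. c' i \<in> F" "(\<Sum>i<u. c' i * pair_snd u xs i) = 0" and "i < u"
      define c where "c i = (if i \<in> {1..u} then c' (i - 1) else 0)" for i
      have "c i \<in> F" for i using c' by (cases i) (auto simp: c_def)
      moreover have "(\<Sum>i<u. c (Suc i) * pair_snd u xs i) = (\<Sum>i<u. c' i * pair_snd u xs i)"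
        by (intro sum.cong) (auto simp: c_def)
      ultimately have "?P c" using c' by (simp add: c_def)
      hence "c = (\<lambda>_. 0)" using H by (simp only:)
      hence "c (Suc i) = 0" by simp
      thus "c' i = 0" using \<open>i < u\<close> by (simp add: c_def)
    qed
  next
    assume ind: "indep u (pair_snd u xs)"
    show "\<forall>c. ?P c \<longrightarrow> c = (\<lambda>_. 0)"
    proof (intro allI impI ext)
      fix c i assume P: "?P c"
      hence low: "\<forall>i<u. c (Suc i) = 0"
        using spec[OF ind[unfolded indep_def], of "\<lambda>i. c (Suc i)"] by simp
      show "c i = 0"
      proof (cases "i \<in> {1..u}")
        case True
        then obtain k where "i = Suc k" "k < u" by (cases i) auto
        thus ?thesis using low by simp
      qed (use P in simp)
    qed
  qed
  finally show ?thesis by (simp only: sum_eq)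
qed

lemma mem_V0_iff:
  assumes "M = 2 * N" "n div e = N" "u \<le> s"
  shows "xs \<in> V0 m n d e s u \<longleftrightarrow> length xs = 2 * u \<and> indep u (pair_snd u xs) \<and>
           (\<forall>k. beta u (pair_fst u xs) (pair_snd u xs) k = 0)"
proof -
  have "xs \<in> V m n d e s u \<longleftrightarrow> length xs = 2 * u \<and>
      (\<forall>j\<in>{0..s}. beta u (pair_fst u xs) (pair_snd u xs) (nat ((int N - int j) mod int M)) = 0)"
    unfolding V_def V_equation by (simp add: assms(2))
  thus ?thesis
    unfolding V0_def mem_Collect_eq V0_coeff_condition_iff
    by (auto simp: beta_vanishes_iff[OF assms(1,3)])
qed

subsection \<open>Counting\<close>

definition solutions :: "nat \<Rightarrow> (nat \<Rightarrow> 'a) \<Rightarrow> (nat \<Rightarrow> 'a) set" where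
  "solutions u y = {x. (\<forall>i\<ge>u. x i = 0) \<and> (\<forall>k. beta u x y k = 0)}"

definition sym_matrices :: "nat \<Rightarrow> (nat \<Rightarrow> nat \<Rightarrow> 'a) set" where
  "sym_matrices u = {C. (\<forall>i j. C i j \<in> F) \<and> (\<forall>i j. C i j = C j i) \<and>
                        (\<forall>i j. \<not> (i < u \<and> j < u) \<longrightarrow> C i j = 0)}"

lemma card_sym_matrices: "card (sym_matrices u) = card F ^ (u * (u + 1) div 2)"
proof -
  let ?T = "SIGMA i:{..<u}. {..i}"
  let ?restr = "\<lambda>C. restrict (\<lambda>(i, j). C i j) ?T"
  let ?extend = "\<lambda>g i j. if i < u \<and> j < u then g (max i j, min i j) else 0"
  have "bij_betw ?restr (sym_matrices u) (\<Pi>\<^sub>E p\<in>?T. F)"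
  proof (rule bij_betw_byWitness[where f' = ?extend])
    show "\<forall>C\<in>sym_matrices u. ?extend (?restr C) = C"
      by (auto simp: sym_matrices_def max_def min_def fun_eq_iff)
    show "\<forall>g\<in>\<Pi>\<^sub>E p\<in>?T. F. ?restr (?extend g) = g"
      by (auto simp: max_def min_def fun_eq_iff PiE_def extensional_def)
    show "?restr ` sym_matrices u \<subseteq> (\<Pi>\<^sub>E p\<in>?T. F)"
      by (rule image_subsetI, subst restrict_PiE_iff) (auto simp: sym_matrices_def)
    show "?extend ` (\<Pi>\<^sub>E p\<in>?T. F) \<subseteq> sym_matrices u"
      by (auto simp: sym_matrices_def max_def min_def PiE_def Pi_def)
  qed
  hence "card (sym_matrices u) = card F ^ card ?T" by (simp add: bij_betw_same_card card_PiE)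
  also have "card ?T = (\<Sum>i<u. Suc i)" by (simp add: card_SigmaI)
  also have "\<dots> = u * (u + 1) div 2"
    using gauss_sum_from_Suc_0[of u, where 'a = nat] by (simp add: sum.atLeast1_atMost_eq)
  finally show ?thesis .
qed

definition mat_mult_vec :: "nat \<Rightarrow> (nat \<Rightarrow> nat \<Rightarrow> 'a) \<Rightarrow> (nat \<Rightarrow> 'a) \<Rightarrow> nat \<Rightarrow> 'a" where
  "mat_mult_vec u C y j = (if j < u then \<Sum>i<u. C j i * y i else 0)"

lemma solutions_eq_image:
  assumes ind: "indep u y"
  shows "solutions u y = (\<lambda>C. mat_mult_vec u C y) ` sym_matrices u"
proof (intro set_eqI iffI)
  fix x assume x: "x \<in> solutions u y"
  hence "\<And>k. beta u x y k = 0" by (simp add: solutions_def)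
  from beta_eq_0_imp_symmetric_coords[OF ind this] obtain C where CF: "\<forall>i j. C i j \<in> F"
    and sym: "\<forall>i<u. \<forall>j<u. C i j = C j i" and coords: "\<forall>j<u. x j = (\<Sum>i<u. C j i * y i)"
    by blast
  define C' where "C' i j = (if i < u \<and> j < u then C i j else 0)" for i j
  have "C' \<in> sym_matrices u" using CF sym by (auto simp: sym_matrices_def C'_def)
  moreover have "x = mat_mult_vec u C' y"
    using x coords by (auto simp: solutions_def mat_mult_vec_def C'_def fun_eq_iff intro: sum.cong)
  ultimately show "x \<in> (\<lambda>C. mat_mult_vec u C y) ` sym_matrices u" by blast
next
  fix x assume "x \<in> (\<lambda>C. mat_mult_vec u C y) ` sym_matrices u"
  then obtain C where "C \<in> sym_matrices u" and x: "x = mat_mult_vec u C y" by blast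
  hence "beta u x y k = 0" for k
    by (intro beta_eq_0_if_symmetric_coords[of C]) (auto simp: sym_matrices_def mat_mult_vec_def)
  thus "x \<in> solutions u y" using x by (auto simp: solutions_def mat_mult_vec_def)
qed

lemma inj_on_mat_mult_vec:
  assumes ind: "indep u y"
  shows "inj_on (\<lambda>C. mat_mult_vec u C y) (sym_matrices u)"
proof (rule inj_onI, rule ext, rule ext)
  fix C C' j i assume C: "C \<in> sym_matrices u" "C' \<in> sym_matrices u"
    and eq: "mat_mult_vec u C y = mat_mult_vec u C' y"
  show "C j i = C' j i"
  proof (cases "j < u \<and> i < u")
    case True
    hence "(\<Sum>i<u. C j i * y i) = (\<Sum>i<u. C' j i * y i)"
      using fun_cong[OF eq, of j] by (simp add: mat_mult_vec_def)
    moreover have "C j l \<in> F" "C' j l \<in> F" for l using C by (simp_all add: sym_matrices_def)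
    ultimately show ?thesis using True by (intro indep_coeffs_eq[OF ind, of "C j" "C' j" i]) simp_all
  qed (use C in \<open>auto simp: sym_matrices_def\<close>)
qed

lemma card_solutions: "indep u y \<Longrightarrow> card (solutions u y) = card (sym_matrices u)"
  by (simp add: solutions_eq_image inj_on_mat_mult_vec card_image)

lemma card_V0:
  assumes "M = 2 * N" "n div e = N" "u \<le> s"
  shows "card (V0 m n d e s u :: 'a list set) = card (indep_tuples u) * card F ^ (u * (u + 1) div 2)"
proof -
  let ?coords = "\<lambda>xs :: 'a list. (pair_snd u xs, pair_fst u xs)"
  have bij: "bij_betw ?coords {xs. length xs = 2 * u} ({y. \<forall>i\<ge>u. y i = 0} \<times> {x. \<forall>i\<ge>u. x i = 0})"
    by (rule bij_betw_pair_coords)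
  have V0_sub: "V0 m n d e s u \<subseteq> {xs :: 'a list. length xs = 2 * u}" by (auto simp: mem_V0_iff[OF assms])
  have "?coords ` V0 m n d e s u = (SIGMA y:indep_tuples u. solutions u y)"
  proof (intro set_eqI iffI)
    fix p assume "p \<in> ?coords ` V0 m n d e s u"
    then obtain xs where xs: "xs \<in> V0 m n d e s u" and p: "p = ?coords xs" by blast
    hence "indep u (pair_snd u xs)" "\<forall>k. beta u (pair_fst u xs) (pair_snd u xs) k = 0"
      by (simp_all add: mem_V0_iff[OF assms])
    thus "p \<in> (SIGMA y:indep_tuples u. solutions u y)"
      unfolding p by (simp add: indep_tuples_def solutions_def pair_fst_def pair_snd_def)
  next
    fix p assume p: "p \<in> (SIGMA y:indep_tuples u. solutions u y)"
    hence "p \<in> ?coords ` {xs. length xs = 2 * u}"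
      using bij_betw_imp_surj_on[OF bij] by (auto simp: indep_tuples_def solutions_def)
    then obtain xs where "length xs = 2 * u" and xs: "p = ?coords xs" by blast
    moreover have "indep u (pair_snd u xs)" "\<forall>k. beta u (pair_fst u xs) (pair_snd u xs) k = 0"
      using p unfolding xs by (simp_all add: indep_tuples_def solutions_def)
    ultimately have "xs \<in> V0 m n d e s u" by (simp add: mem_V0_iff[OF assms])
    thus "p \<in> ?coords ` V0 m n d e s u" using xs by blast
  qed
  moreover have "inj_on ?coords (V0 m n d e s u)"
    using bij_betw_imp_inj_on[OF bij] V0_sub by (rule inj_on_subset)
  ultimately have "card (V0 m n d e s u :: 'a list set) = card (SIGMA y:indep_tuples u. solutions u y)"
    by (simp add: card_image[symmetric])
  also have "\<dots> = (\<Sum>y\<in>indep_tuples u. card (solutions u y))"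
    by (intro card_SigmaI finite_indep_tuples)
       (auto intro: finite_subset[OF _ finite_funs_vanishing_from] simp: solutions_def)
  also have "\<dots> = (\<Sum>y\<in>indep_tuples u. card (sym_matrices u))"
    by (intro sum.cong) (auto simp: indep_tuples_def card_solutions)
  finally show ?thesis by (simp add: card_sym_matrices)
qed

end


lemma int_prod_two_pow_diff:
  assumes "m = e * M"
  shows "int (\<Prod>i<u. 2 ^ m - 2 ^ (e * i)) = (\<Prod>i=0..<u. 2 ^ m - 2 ^ (e * i) :: int)"
proof (cases "u \<le> M")
  case True
  hence "(2::nat) ^ (e * i) \<le> 2 ^ m" if "i < u" for i
    using that assms by (intro power_increasing) simp_all
  thus ?thesis by (simp add: atLeast0LessThan of_nat_diff)
next
  case False
  hence "M \<in> {..<u}" by simp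
  hence "(\<Prod>i<u. 2 ^ m - 2 ^ (e * i) :: nat) = 0" "(\<Prod>i<u. 2 ^ m - 2 ^ (e * i) :: int) = 0"
    using assms by (auto intro!: prod_zero bexI[of _ M])
  thus ?thesis by (simp only: atLeast0LessThan of_nat_0)
qed

theorem lemma6p2:
  fixes m n d e s u :: nat
  assumes "card (UNIV :: ('a::{field,finite}) set) = 2 ^ m"
    and "n > 0" "d > 0" "e > 0" "m = 2 * n"
    and "e = gcd n d" "e = gcd m d"
    and "u \<ge> 2" "s \<ge> u"
  shows "int (card (V0 m n d e s u :: ('a::{field,finite}) list set))
       = 2 ^ (e * u * (u + 1) div 2) * (\<Prod>i=0..<u. (2 ^ m - 2 ^ (e * i) :: int))"
proof -
  define N where "N = n div e"
  define M where "M = 2 * N"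
  have m_eq: "m = e * M" using assms(5,6) by (simp add: M_def N_def)
  interpret frobenius_power m d e M
  proof
    show "card (UNIV :: 'a set) = 2 ^ m" by (rule assms(1))
    show "0 < m" "m = e * M" using assms(2,5) m_eq by simp_all
    show "gcd d m = e" using assms(7) by (simp add: gcd.commute)
  qed
  have "card (V0 m n d e s u :: 'a list set) = card (indep_tuples u) * card F ^ (u * (u + 1) div 2)"
    using card_V0[OF M_def N_def[symmetric] assms(9)] .
  also have "\<dots> = (\<Prod>i<u. 2 ^ m - 2 ^ (e * i)) * 2 ^ (e * (u * (u + 1) div 2))"
    by (simp add: card_indep_tuples card_subF assms(1) power_mult)
  also have "e * (u * (u + 1) div 2) = e * u * (u + 1) div 2"
  proof -
    have "2 dvd u * (u + 1)" by simp
    thus ?thesis by (simp only: div_mult_swap mult.assoc)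
  qed
  finally show ?thesis using int_prod_two_pow_diff[OF m_eq] by (simp add: mult.commute)
qed

end
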